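(* Let $A\in\mathbb{R}^{n\times m}$ with $n<m$ have nonzero columns $\alpha_1,\dots,\alpha_m$, let $c_{ij}=\langle\alpha_i,\alpha_j\rangle$ and $\nu(i)=\max_{j\neq i}\frac{|c_{ij}|}{c_{ii}}$. Then every $x\in\mathbb{R}^m$ with $$\|x\|_0\le\frac{1}{2\max_i\nu(i)}\Big(\min_{i\neq j}\frac{c_{ii}}{c_{jj}}-\frac12\Big)$$ is the unique minimizer of $\min_{z\in\mathbb{R}^m}\|z\|_1$ subject to $Az=Ax$; that is, the sparsity level satisfies $SL\ge\frac{1}{2\max_i\nu(i)}\big(\min_{i\neq j}\frac{c_{ii}}{c_{jj}}-\frac12\big)$.
   Context: $[m]=\{1,\dots,m\}$; $\|x\|_0$ is the number of nonzero entries of $x$; the maximum over $i$ and minimum over $i\neq j$ range over $[m]$. The sparsity level $SL$ of $A$ is the largest integer $s$ such that every $x$ with $\|x\|_0\le s$ is uniquely recovered as the minimizer of $\min\|z\|_1$ s.t. $Az=Ax$. *)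

theory Defs
  imports "HOL-Analysis.Analysis"
begin

definition gram :: "real^'m^'n \<Rightarrow> 'm \<Rightarrow> 'm \<Rightarrow> real" where
  "gram A i j = column i A \<bullet> column j A"

definition nu :: "real^'m^'n \<Rightarrow> 'm \<Rightarrow> real" where
  "nu A i = Max {\<bar>gram A i j\<bar> / gram A i i | j. j \<noteq> i}"

definition l0norm :: "real^'m \<Rightarrow> nat" where
  "l0norm x = card {i. x $ i \<noteq> 0}"

definition l1norm :: "real^'m \<Rightarrow> real" where
  "l1norm z = (\<Sum>i\<in>UNIV. \<bar>z $ i\<bar>)"

definition unique_l1_minimizer :: "real^'m^'n \<Rightarrow> real^'m \<Rightarrow> bool" where
  "unique_l1_minimizer A x \<longleftrightarrow>
     (\<forall>z. A *v z = A *v x \<longrightarrow> z \<noteq> x \<longrightarrow> l1norm x < l1norm z)"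

end

theory Submission
  imports Defs
begin

text \<open>Every kernel vector h of A satisfies c_ii h_i = -\<Sum>_{j\<noteq>i} c_ij h_j, hence
  |h_i| \<le> \<nu>(i) (\<parallel>h\<parallel>_1 - |h_i|). With N = max_i \<nu>(i) this gives (1 + N) |h_i| \<le> N \<parallel>h\<parallel>_1, so
  on any support S of size s the mass of h is at most s N \<parallel>h\<parallel>_1. Since the minimal ratio
  c_ii/c_jj is at most 1, the hypothesis forces s N \<le> 1/4, so h puts less than half of
  its \<open>\<ell>\<^sub>1\<close> mass on the support of x: this null space property makes x the unique
  \<open>\<ell>\<^sub>1\<close> minimizer.\<close>

lemma abs_le_l1norm: "\<bar>h $ i\<bar> \<le> l1norm h"
  unfolding l1norm_def by (rule member_le_sum) auto

lemma l1norm_pos: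
  assumes "h \<noteq> 0"
  shows "0 < l1norm h"
proof -
  obtain k where "h $ k \<noteq> 0"
    using assms by (metis vec_eq_iff zero_index)
  then show ?thesis
    using abs_le_l1norm[of h k] by linarith
qed

lemma l1norm_split:
  "l1norm v = (\<Sum>i\<in>S. \<bar>v $ i\<bar>) + (\<Sum>i\<in>-S. \<bar>v $ i\<bar>)"
  unfolding l1norm_def
  by (metis Compl_eq_Diff_UNIV finite subset_UNIV sum.subset_diff add.commute)

lemma unique_l1_minimizer_if_null_space_property:
  fixes A :: "real^'m^'n" and x :: "real^'m"
  assumes nsp: "\<And>h. A *v h = 0 \<Longrightarrow> h \<noteq> 0 \<Longrightarrow> 2 * (\<Sum>i\<in>S. \<bar>h $ i\<bar>) < l1norm h"
    and supp: "{i. x $ i \<noteq> 0} \<subseteq> S"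
  shows "unique_l1_minimizer A x"
  unfolding unique_l1_minimizer_def
proof (intro allI impI)
  fix z assume "A *v z = A *v x" and "z \<noteq> x"
  define h where "h = z - x"
  have "A *v h = 0" and "h \<noteq> 0"
    using \<open>A *v z = A *v x\<close> \<open>z \<noteq> x\<close> by (simp_all add: h_def matrix_vector_mult_diff_distrib)
  then have mass: "2 * (\<Sum>i\<in>S. \<bar>h $ i\<bar>) < l1norm h"
    by (rule nsp)
  have x_zero: "x $ i = 0" if "i \<notin> S" for i
    using supp that by blast
  have x_off: "(\<Sum>i\<in>-S. \<bar>x $ i\<bar>) = 0"
    using x_zero by simp
  have z_on: "(\<Sum>i\<in>S. \<bar>x $ i\<bar>) - (\<Sum>i\<in>S. \<bar>h $ i\<bar>) \<le> (\<Sum>i\<in>S. \<bar>z $ i\<bar>)"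
    unfolding sum_subtractf[symmetric]
    by (rule sum_mono) (simp add: h_def abs_triangle_ineq2_sym)
  have z_off: "(\<Sum>i\<in>-S. \<bar>z $ i\<bar>) = (\<Sum>i\<in>-S. \<bar>h $ i\<bar>)"
    using x_zero by (simp add: h_def)
  show "l1norm x < l1norm z"
    using l1norm_split[of x S] l1norm_split[of z S] l1norm_split[of h S] x_off z_on z_off mass
    by linarith
qed

lemma gram_pos: "column i A \<noteq> 0 \<Longrightarrow> gram A i i > 0"
  by (simp add: gram_def)

lemma gram_kernel_sum:
  fixes A :: "real^'m^'n"
  assumes "A *v h = 0"
  shows "(\<Sum>j\<in>UNIV. h $ j * gram A i j) = 0"
proof -
  have "column i A \<bullet> (A *v h) = 0"
    using assms by simp
  then show ?thesis
    unfolding matrix_mult_sum inner_sum_right gram_def scalar_mult_eq_scaleR by simp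
qed

lemma abs_gram_div_le_nu:
  fixes A :: "real^'m^'n"
  assumes "j \<noteq> i"
  shows "\<bar>gram A i j\<bar> / gram A i i \<le> nu A i"
  unfolding nu_def by (rule Max_ge) (use assms in auto)

lemma nu_nonneg:
  fixes A :: "real^'m^'n"
  assumes "j \<noteq> i"
  shows "0 \<le> nu A i"
proof -
  have "0 \<le> gram A i i"
    by (simp add: gram_def)
  then show ?thesis
    using abs_gram_div_le_nu[OF assms, of A] by (meson divide_nonneg_nonneg abs_ge_zero order_trans)
qed

lemma kernel_coordinate_bound:
  fixes A :: "real^'m^'n"
  assumes "A *v h = 0" and pos: "gram A i i > 0"
  shows "\<bar>h $ i\<bar> \<le> nu A i * (l1norm h - \<bar>h $ i\<bar>)"
proof -
  have "h $ i * gram A i i = - (\<Sum>j\<in>UNIV-{i}. h $ j * gram A i j)"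
    using gram_kernel_sum[OF assms(1), of i] by (simp add: sum.remove[of UNIV i])
  then have "\<bar>h $ i\<bar> * gram A i i = \<bar>\<Sum>j\<in>UNIV-{i}. h $ j * gram A i j\<bar>"
    using pos by (metis abs_minus_cancel abs_mult abs_of_pos)
  also have "\<dots> \<le> (\<Sum>j\<in>UNIV-{i}. \<bar>h $ j\<bar> * \<bar>gram A i j\<bar>)"
    using sum_abs[of "\<lambda>j. h $ j * gram A i j" "UNIV-{i}"] by (simp add: abs_mult)
  also have "\<dots> \<le> (\<Sum>j\<in>UNIV-{i}. \<bar>h $ j\<bar> * (nu A i * gram A i i))"
  proof (rule sum_mono)
    fix j assume "j \<in> UNIV - {i}"
    then have "\<bar>gram A i j\<bar> \<le> nu A i * gram A i i"
      using abs_gram_div_le_nu[of j i A] pos by (simp add: divide_le_eq)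
    then show "\<bar>h $ j\<bar> * \<bar>gram A i j\<bar> \<le> \<bar>h $ j\<bar> * (nu A i * gram A i i)"
      by (simp add: mult_left_mono)
  qed
  also have "\<dots> = nu A i * (\<Sum>j\<in>UNIV-{i}. \<bar>h $ j\<bar>) * gram A i i"
    by (simp add: sum_distrib_left sum_distrib_right algebra_simps)
  also have "(\<Sum>j\<in>UNIV-{i}. \<bar>h $ j\<bar>) = l1norm h - \<bar>h $ i\<bar>"
    unfolding l1norm_def by (simp add: sum_diff1)
  finally show ?thesis
    using pos by simp
qed

lemma kernel_support_mass_bound:
  fixes A :: "real^'m^'n"
  assumes "A *v h = 0" and cols: "\<And>i. column i A \<noteq> 0" and nu_le: "\<And>i. nu A i \<le> N"
  shows "(1 + N) * (\<Sum>i\<in>S. \<bar>h $ i\<bar>) \<le> real (card S) * N * l1norm h"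
proof -
  have coord: "(1 + N) * \<bar>h $ i\<bar> \<le> N * l1norm h" for i
  proof -
    have "\<bar>h $ i\<bar> \<le> nu A i * (l1norm h - \<bar>h $ i\<bar>)"
      using kernel_coordinate_bound[OF assms(1) gram_pos[OF cols]] .
    also have "\<dots> \<le> N * (l1norm h - \<bar>h $ i\<bar>)"
      using nu_le abs_le_l1norm[of h i] by (intro mult_right_mono) auto
    finally show ?thesis
      by (simp add: algebra_simps)
  qed
  have "(1 + N) * (\<Sum>i\<in>S. \<bar>h $ i\<bar>) = (\<Sum>i\<in>S. (1 + N) * \<bar>h $ i\<bar>)"
    by (simp add: sum_distrib_left)
  also have "\<dots> \<le> (\<Sum>i\<in>S. N * l1norm h)"
    by (rule sum_mono) (rule coord)
  finally show ?thesis
    by simp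
qed

lemma Min_gram_ratio_le_one:
  fixes A :: "real^'m^'n" and a b :: 'm
  assumes "a \<noteq> b" and cols: "\<And>i. column i A \<noteq> 0"
  shows "Min {gram A i i / gram A j j | i j. i \<noteq> j} \<le> 1"
proof -
  let ?R = "{gram A i i / gram A j j | i j. i \<noteq> j}"
  have "?R \<subseteq> (\<lambda>(i, j). gram A i i / gram A j j) ` UNIV"
    by auto
  then have fin: "finite ?R"
    by (rule finite_subset) simp
  have "Min ?R \<le> gram A a a / gram A b b" and "Min ?R \<le> gram A b b / gram A a a"
    using assms(1) by (auto intro!: Min_le[OF fin])
  moreover have "gram A a a / gram A b b \<le> 1 \<or> gram A b b / gram A a a \<le> 1"
    using gram_pos[OF cols, of a] gram_pos[OF cols, of b] by (auto simp: divide_le_eq)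
  ultimately show ?thesis
    by linarith
qed

lemma kernel_support_mass_lt_half:
  fixes A :: "real^'m^'n"
  assumes "A *v h = 0" "h \<noteq> 0" "\<And>i. column i A \<noteq> 0" "\<And>i. nu A i \<le> N"
    and "0 \<le> N" and sparse: "real (card S) * N \<le> 1/4"
  shows "2 * (\<Sum>i\<in>S. \<bar>h $ i\<bar>) < l1norm h"
proof -
  have "(\<Sum>i\<in>S. \<bar>h $ i\<bar>) \<le> (1 + N) * (\<Sum>i\<in>S. \<bar>h $ i\<bar>)"
    using \<open>0 \<le> N\<close> sum_nonneg[of S "\<lambda>i. \<bar>h $ i\<bar>"] by (simp add: distrib_right)
  also have "\<dots> \<le> real (card S) * N * l1norm h"
    using kernel_support_mass_bound[OF assms(1,3,4)] .
  also have "\<dots> \<le> 1/4 * l1norm h"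
    using sparse l1norm_pos[OF \<open>h \<noteq> 0\<close>] by (intro mult_right_mono) auto
  finally show ?thesis
    using l1norm_pos[OF \<open>h \<noteq> 0\<close>] by linarith
qed

lemma exists_distinct_if_card_less:
  assumes "CARD('n::finite) < CARD('m::finite)"
  obtains a b :: "'m::finite" where "a \<noteq> b"
proof -
  have "2 \<le> CARD('m)"
    using assms zero_less_card_finite[where 'a = 'n] by linarith
  then obtain T :: "'m set" where "card T = 2"
    using ex_card by blast
  then show ?thesis
    using that by (auto simp: card_2_iff)
qed

theorem mainTheorem7:
  fixes A :: "real^'m^'n" and x :: "real^'m"
  assumes "CARD('n) < CARD('m)"
    and "\<And>i. column i A \<noteq> 0"
    and "real (l0norm x) \<le>
           (1 / (2 * Max (range (nu A)))) *
           (Min {gram A i i / gram A j j | i j. i \<noteq> j} - 1/2)"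
  shows "unique_l1_minimizer A x"
proof -
  define N where "N = Max (range (nu A))"
  define S where "S = {i. x $ i \<noteq> 0}"
  obtain a b :: 'm where "a \<noteq> b"
    using exists_distinct_if_card_less[OF assms(1)] .
  have nu_le: "nu A i \<le> N" for i
    unfolding N_def by (rule Max_ge) auto
  have "0 \<le> N"
    using nu_nonneg[OF \<open>a \<noteq> b\<close>, of A] nu_le[of b] by linarith
  have "real (card S) \<le> 1 / (2 * N) * (1/2)"
    using assms(3) Min_gram_ratio_le_one[OF \<open>a \<noteq> b\<close> assms(2)] \<open>0 \<le> N\<close>
    unfolding S_def N_def l0norm_def by (elim order_trans) (intro mult_left_mono; simp)
  then have "real (card S) * N \<le> 1/4"
    using \<open>0 \<le> N\<close> by (cases "N = 0") (simp_all add: le_divide_eq)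
  then show ?thesis
    using kernel_support_mass_lt_half[OF _ _ assms(2) nu_le \<open>0 \<le> N\<close>]
    by (intro unique_l1_minimizer_if_null_space_property[where S = S]) (auto simp: S_def)
qed

end
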